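(* Let $a,b>0$, $D=[0,a]\times[0,b]$, and let $f:D\to\mathbb{R}$ be a $C^3$ function. Let $p\in\operatorname{int}D$ be a local maximum of $f$ at which the Hessian of $f$ is negative definite. Then there exist a neighborhood $U$ of $p$ and a number $r>0$ such that for every sufficiently large $n$ for which $D_n$ is nondegenerate, there is exactly one grid vertex $p_{i,j}$ of $D_n$ in $U$ which is maximal within its grid circle $C_r(p_{i,j})$.
   Context: For $n\ge1$, $D_n$ denotes the division of $D$ into $n\times n$ congruent rectangles; its grid vertices are the points $p_{i,j}=\left(\frac{i}{n}a,\frac{j}{n}b\right)$, $0\le i,j\le n$. $D_n$ is called nondegenerate if $f(p)\neq f(p')$ for any two distinct grid vertices $p\neq p'$ of $D_n$. The grid circle of centre $p_{i,j}$ and radius $r$ is $C_r(p_{i,j})=\{p_{l,m}: 0\le l,m\le n,\ \max\{|l-i|,|m-j|\}\le r\}$. A grid vertex $p_{i,j}$ is minimal (resp. maximal) within $C_r(p_{i,j})$ if $f(p_{i,j})\le f(q)$ (resp. $f(p_{i,j})\ge f(q)$) for every $q\in C_r(p_{i,j})$. *)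

theory Defs
  imports "HOL-Analysis.Analysis"
begin

definition pd1 :: "(real \<times> real \<Rightarrow> real) \<Rightarrow> real \<times> real \<Rightarrow> real" where
  "pd1 f x = deriv (\<lambda>t. f (t, snd x)) (fst x)"

definition pd2 :: "(real \<times> real \<Rightarrow> real) \<Rightarrow> real \<times> real \<Rightarrow> real" where
  "pd2 f x = deriv (\<lambda>t. f (fst x, t)) (snd x)"

fun Ck :: "nat \<Rightarrow> (real \<times> real) set \<Rightarrow> (real \<times> real \<Rightarrow> real) \<Rightarrow> bool" where
  "Ck 0 S f = continuous_on S f"
| "Ck (Suc k) S f =
     (continuous_on S f \<and>
      (\<forall>x\<in>S. (\<lambda>t. f (t, snd x)) differentiable (at (fst x))
             \<and> (\<lambda>t. f (fst x, t)) differentiable (at (snd x)))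
      \<and> Ck k S (pd1 f) \<and> Ck k S (pd2 f))"

text \<open>Hessian matrix (index 0 = first coordinate, 1 = second coordinate);
  entry (i,j) is the derivative in direction j of the derivative in direction i.\<close>

definition pd :: "nat \<Rightarrow> (real \<times> real \<Rightarrow> real) \<Rightarrow> real \<times> real \<Rightarrow> real" where
  "pd i f = (if i = 0 then pd1 f else pd2 f)"

definition hessian :: "(real \<times> real \<Rightarrow> real) \<Rightarrow> real \<times> real \<Rightarrow> nat \<Rightarrow> nat \<Rightarrow> real" where
  "hessian f x i j = pd j (pd i f) x"

definition negative_definite :: "(nat \<Rightarrow> nat \<Rightarrow> real) \<Rightarrow> bool" where
  "negative_definite H \<longleftrightarrow>
     (\<forall>u :: nat \<Rightarrow> real. (\<exists>i<2. u i \<noteq> 0) \<longrightarrow> (\<Sum>i<2. \<Sum>j<2. u i * H i j * u j) < 0)"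

definition grid_vertex :: "real \<Rightarrow> real \<Rightarrow> nat \<Rightarrow> nat \<Rightarrow> nat \<Rightarrow> real \<times> real" where
  "grid_vertex a b n i j = (real i / real n * a, real j / real n * b)"

definition nondegenerate :: "real \<Rightarrow> real \<Rightarrow> (real \<times> real \<Rightarrow> real) \<Rightarrow> nat \<Rightarrow> bool" where
  "nondegenerate a b f n \<longleftrightarrow>
     (\<forall>i j l m. i \<le> n \<and> j \<le> n \<and> l \<le> n \<and> m \<le> n \<and>
        grid_vertex a b n i j \<noteq> grid_vertex a b n l m \<longrightarrow>
        f (grid_vertex a b n i j) \<noteq> f (grid_vertex a b n l m))"

definition grid_circle :: "real \<Rightarrow> real \<Rightarrow> nat \<Rightarrow> nat \<Rightarrow> nat \<Rightarrow> nat \<Rightarrow> (real \<times> real) set" where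
  "grid_circle a b n r i j =
     {grid_vertex a b n l m | l m. l \<le> n \<and> m \<le> n \<and>
        max \<bar>int l - int i\<bar> \<bar>int m - int j\<bar> \<le> int r}"

definition maximal_in_circle ::
  "real \<Rightarrow> real \<Rightarrow> (real \<times> real \<Rightarrow> real) \<Rightarrow> nat \<Rightarrow> nat \<Rightarrow> nat \<Rightarrow> nat \<Rightarrow> bool" where
  "maximal_in_circle a b f n r i j \<longleftrightarrow>
     (\<forall>q\<in>grid_circle a b n r i j. f (grid_vertex a b n i j) \<ge> f q)"

end

theory Submission
  imports Defs
begin

text \<open>Near a nondegenerate maximum \<open>p\<close> the Hessian stays close to its negative definite value, so
  the gradient points inwards, \<open>\<nabla>f(x) \<cdot> (x - p) \<le> - \<lambda> |x - p|\<^sup>2\<close>, and \<open>f\<close> satisfies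
  second-order Taylor bounds along the coordinate axes; only two derivatives of \<open>f\<close> are needed.
  If a grid vertex \<open>x\<close> of mesh \<open>h\<close> is not smaller than its neighbour one step towards \<open>p\<close> in
  each coordinate, the Taylor bound gives \<open>\<partial>\<^sub>kf(x) (x\<^sub>k - p\<^sub>k) \<ge> - M h |x\<^sub>k - p\<^sub>k|\<close>, and with the inward
  gradient this puts \<open>x\<close> within \<open>O(h)\<close> of \<open>p\<close>. A maximiser of \<open>f\<close> over the grid vertices of a small
  square around \<open>p\<close> has this property, so it lies near \<open>p\<close> and is maximal within its grid
  circle of a fixed radius \<open>r\<close>. Two vertices near \<open>p\<close> that are maximal within their circles
  are at most \<open>r\<close> steps apart, so each lies in the other's circle; their values agree, and
  nondegeneracy of the grid makes them equal.\<close>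


section \<open>Calculus in one variable\<close>

lemma abs_le_of_closed_segment:
  fixes s u v c r :: real
  assumes "s \<in> closed_segment u v" "\<bar>u - c\<bar> \<le> r" "\<bar>v - c\<bar> \<le> r"
  shows "\<bar>s - c\<bar> \<le> r"
  using assms by (auto simp: closed_segment_eq_real_ivl split: if_splits)

lemma increment_le_of_derivative_close:
  fixes g g' :: "real \<Rightarrow> real"
  assumes deriv: "\<And>s. s \<in> closed_segment t y \<Longrightarrow> (g has_real_derivative g' s) (at s)"
    and close: "\<And>s. s \<in> closed_segment t y \<Longrightarrow> \<bar>g' s - c\<bar> \<le> e"
  shows "\<bar>g y - g t - c * (y - t)\<bar> \<le> e * \<bar>y - t\<bar>"
proof -
  have ordered: "\<bar>g v - g u - c * (v - u)\<bar> \<le> e * \<bar>v - u\<bar>"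
    if uv: "u < v" and seg: "closed_segment u v = closed_segment t y" for u v
  proof -
    have "s \<in> closed_segment t y" if "u \<le> s" "s \<le> v" for s
      using that uv unfolding seg[symmetric] by (simp add: closed_segment_eq_real_ivl)
    then obtain z where z: "u < z" "z < v" "g v - g u = (v - u) * g' z"
      using MVT2[OF uv] deriv by blast
    have "z \<in> closed_segment t y"
      using z uv seg by (auto simp: closed_segment_eq_real_ivl)
    then have "\<bar>g' z - c\<bar> * \<bar>v - u\<bar> \<le> e * \<bar>v - u\<bar>"
      using close by (intro mult_right_mono) auto
    then show ?thesis
      using z(3) by (simp add: abs_mult left_diff_distrib[symmetric] mult.commute)
  qed
  consider "t < y" | "y < t" | "t = y" by linarith
  then show ?thesis
  proof cases
    case 2
    then show ?thesis
      using ordered[of y t] by (simp add: closed_segment_commute abs_minus_commute algebra_simps)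
  qed (use ordered in auto)
qed

lemma second_order_taylor_bound:
  fixes g g' g'' :: "real \<Rightarrow> real"
  assumes "\<And>s. s \<in> closed_segment t y \<Longrightarrow> (g has_real_derivative g' s) (at s)"
    and "\<And>s. s \<in> closed_segment t y \<Longrightarrow> (g' has_real_derivative g'' s) (at s)"
    and "\<And>s. s \<in> closed_segment t y \<Longrightarrow> \<bar>g'' s\<bar> \<le> M"
  shows "\<bar>g y - g t - g' t * (y - t)\<bar> \<le> M * (y - t)\<^sup>2"
proof -
  have "\<bar>g' s - g' t\<bar> \<le> M * \<bar>y - t\<bar>" if s: "s \<in> closed_segment t y" for s
  proof -
    have sub: "closed_segment t s \<subseteq> closed_segment t y"
      using s by (simp add: subset_closed_segment)
    have "\<bar>g' s - g' t - 0 * (s - t)\<bar> \<le> M * \<bar>s - t\<bar>"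
      using assms(2,3) sub by (intro increment_le_of_derivative_close) auto
    also have "\<dots> \<le> M * \<bar>y - t\<bar>"
    proof (rule mult_left_mono)
      show "\<bar>s - t\<bar> \<le> \<bar>y - t\<bar>" using dist_in_closed_segment[OF s] by (simp add: dist_real_def abs_minus_commute)
      show "0 \<le> M" using assms(3)[of t] by fastforce
    qed
    finally show ?thesis by simp
  qed
  then have "\<bar>g y - g t - g' t * (y - t)\<bar> \<le> M * \<bar>y - t\<bar> * \<bar>y - t\<bar>"
    using assms(1) by (intro increment_le_of_derivative_close) auto
  then show ?thesis by (simp add: power2_eq_square abs_mult_self)
qed


section \<open>Elementary inequalities and quadratic forms\<close>

lemma abs_add_squared_le: "(\<bar>x\<bar> + \<bar>y\<bar>)\<^sup>2 \<le> 2 * (x\<^sup>2 + y\<^sup>2)" for x y :: real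
  using zero_le_power2[of "\<bar>x\<bar> - \<bar>y\<bar>"] by (simp add: power2_eq_square algebra_simps)

lemma abs_add_le_of_sum_squares_le:
  fixes d1 d2 c lam :: real
  assumes "0 < lam" "0 \<le> c" "lam * (d1\<^sup>2 + d2\<^sup>2) \<le> c * (\<bar>d1\<bar> + \<bar>d2\<bar>)"
  shows "\<bar>d1\<bar> + \<bar>d2\<bar> \<le> 2 * c / lam"
proof (cases "\<bar>d1\<bar> + \<bar>d2\<bar> = 0")
  case False
  define S where "S = \<bar>d1\<bar> + \<bar>d2\<bar>"
  have "S\<^sup>2 \<le> 2 * (d1\<^sup>2 + d2\<^sup>2)"
    using abs_add_squared_le by (simp add: S_def)
  then have "lam * S\<^sup>2 \<le> lam * (2 * (d1\<^sup>2 + d2\<^sup>2))"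
    using assms(1) by (intro mult_left_mono) auto
  also have "\<dots> = 2 * (lam * (d1\<^sup>2 + d2\<^sup>2))" by simp
  also have "\<dots> \<le> 2 * c * S"
    using assms(3) by (simp add: S_def)
  finally have "lam * S * S \<le> 2 * c * S" by (simp add: power2_eq_square)
  then have "lam * S \<le> 2 * c"
    using False by (simp add: S_def mult.commute mult_le_cancel_left_pos)
  then show ?thesis using assms(1) by (simp add: S_def field_simps)
next
  case True
  have "0 \<le> 2 * c / lam" using assms(1,2) by simp
  with True show ?thesis by linarith
qed

text \<open>\<open>u\<close> and \<open>v\<close> are the values after and before a step from \<open>x\<close> to \<open>x - h * sgn e\<close>,
  i.e. towards a centre at signed distance \<open>e\<close> from \<open>x\<close>.\<close>

lemma slope_bound_from_descent_step:
  fixes D e h M u v :: real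
  assumes "\<bar>u - v - D * (- h * sgn e)\<bar> \<le> M * (- h * sgn e)\<^sup>2" "u \<le> v" "0 < h"
  shows "- M * h * \<bar>e\<bar> \<le> D * e"
proof -
  consider "0 < e" | "e < 0" | "e = 0" by linarith
  then show ?thesis
  proof cases
    case 1
    with assms(1) have "\<bar>u - v + D * h\<bar> \<le> M * h * h" by (simp add: power2_eq_square)
    with assms(2) have "(- D) * h \<le> (M * h) * h" unfolding abs_le_iff by linarith
    then have "- D \<le> M * h" using \<open>0 < h\<close> by (rule mult_right_le_imp_le)
    then have "(- D) * e \<le> (M * h) * e" using 1 by (intro mult_right_mono) auto
    then show ?thesis using 1 by simp
  next
    case 2
    with assms(1) have "\<bar>u - v - D * h\<bar> \<le> M * h * h" by (simp add: power2_eq_square)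
    with assms(2) have "D * h \<le> (M * h) * h" unfolding abs_le_iff by linarith
    then have "D \<le> M * h" using \<open>0 < h\<close> by (rule mult_right_le_imp_le)
    then have "(M * h) * e \<le> D * e" using 2 by (intro mult_right_mono_neg) auto
    then show ?thesis using 2 by simp
  qed simp
qed

lemma quadratic_form_le_completed_square:
  fixes A s D x y :: real
  assumes "A < 0"
  shows "A * x\<^sup>2 + s * x * y + D * y\<^sup>2 \<le> (4 * A * D - s\<^sup>2) / (4 * A) * y\<^sup>2"
proof -
  have "A * x\<^sup>2 + s * x * y + D * y\<^sup>2 - (4 * A * D - s\<^sup>2) / (4 * A) * y\<^sup>2
      = (2 * A * x + s * y)\<^sup>2 / (4 * A)"
    using assms by (simp add: field_simps power2_eq_square)
  also have "\<dots> \<le> 0"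
    using assms by (intro divide_nonneg_neg) auto
  finally show ?thesis by simp
qed

lemma quadratic_form_le_neg_sum_squares:
  fixes A s D :: real
  assumes neg: "\<And>x y. (x, y) \<noteq> (0, 0) \<Longrightarrow> A * x\<^sup>2 + s * x * y + D * y\<^sup>2 < 0"
  shows "\<exists>l>0. \<forall>x y. A * x\<^sup>2 + s * x * y + D * y\<^sup>2 \<le> - l * (x\<^sup>2 + y\<^sup>2)"
proof -
  have A: "A < 0" and D: "D < 0" using neg[of 1 0] neg[of 0 1] by simp_all
  define c where "c = 4 * A * D - s\<^sup>2"
  have "c / (4 * A) = A * (- s / (2 * A))\<^sup>2 + s * (- s / (2 * A)) * 1 + D * 1\<^sup>2"
    using A by (simp add: c_def field_simps power2_eq_square)
  also have "\<dots> < 0" by (rule neg) simp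
  finally have c: "0 < c" using A by (simp add: divide_less_0_iff)
  define l where "l = min (c / (- 4 * A)) (c / (- 4 * D)) / 2"
  have "0 < c / (- 4 * A)" "0 < c / (- 4 * D)" using A D c by (simp_all add: divide_less_0_iff)
  then have l: "0 < l" by (simp add: l_def)
  have "A * x\<^sup>2 + s * x * y + D * y\<^sup>2 \<le> - l * (x\<^sup>2 + y\<^sup>2)" for x y
  proof -
    have "A * x\<^sup>2 + s * x * y + D * y\<^sup>2 \<le> - (c / (- 4 * A)) * y\<^sup>2"
      using quadratic_form_le_completed_square[OF A, where x = x and y = y and s = s and D = D] by (simp add: c_def)
    moreover have "A * x\<^sup>2 + s * x * y + D * y\<^sup>2 \<le> - (c / (- 4 * D)) * x\<^sup>2"
      using quadratic_form_le_completed_square[OF D, where x = y and y = x and s = s and D = A]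
      by (simp add: c_def algebra_simps)
    moreover have "2 * l * y\<^sup>2 \<le> c / (- 4 * A) * y\<^sup>2"
      by (rule mult_right_mono) (simp_all add: l_def)
    moreover have "2 * l * x\<^sup>2 \<le> c / (- 4 * D) * x\<^sup>2"
      by (rule mult_right_mono) (simp_all add: l_def)
    ultimately show ?thesis by (simp only: mult_minus_left distrib_left)
  qed
  with l show ?thesis by blast
qed

lemma negative_definite_quadratic_form:
  assumes "negative_definite H" "(x, y) \<noteq> (0, 0)"
  shows "H 0 0 * x\<^sup>2 + (H 0 1 + H 1 0) * x * y + H 1 1 * y\<^sup>2 < 0"
proof -
  define u :: "nat \<Rightarrow> real" where "u = (\<lambda>i. if i = 0 then x else y)"
  have "\<exists>i<2. u i \<noteq> 0"
  proof (cases "x = 0")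
    case True
    then have "u 1 \<noteq> 0" using assms(2) by (simp add: u_def)
    then show ?thesis by (intro exI[of _ 1]) simp
  next
    case False
    then show ?thesis by (intro exI[of _ 0]) (simp add: u_def)
  qed
  then have "(\<Sum>i<2. \<Sum>j<2. u i * H i j * u j) < 0"
    using assms(1) unfolding negative_definite_def by blast
  moreover have "(\<Sum>i<2. \<Sum>j<2. u i * H i j * u j)
      = H 0 0 * x\<^sup>2 + (H 0 1 + H 1 0) * x * y + H 1 1 * y\<^sup>2"
    by (simp add: u_def numeral_2_eq_2 power2_eq_square algebra_simps)
  ultimately show ?thesis by simp
qed

lemma inner_le_of_linearization:
  fixes g1 g2 A B C D d1 d2 e l :: real
  assumes "0 \<le> e"
    and "\<bar>g1 - (A * d1 + B * d2)\<bar> \<le> e * (\<bar>d1\<bar> + \<bar>d2\<bar>)"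
    and "\<bar>g2 - (C * d1 + D * d2)\<bar> \<le> e * (\<bar>d1\<bar> + \<bar>d2\<bar>)"
    and "A * d1\<^sup>2 + (B + C) * d1 * d2 + D * d2\<^sup>2 \<le> - l * (d1\<^sup>2 + d2\<^sup>2)"
  shows "g1 * d1 + g2 * d2 \<le> (2 * e - l) * (d1\<^sup>2 + d2\<^sup>2)"
proof -
  define r1 where "r1 = g1 - (A * d1 + B * d2)"
  define r2 where "r2 = g2 - (C * d1 + D * d2)"
  have "r1 * d1 \<le> \<bar>r1\<bar> * \<bar>d1\<bar>" by (metis abs_ge_self abs_mult)
  also have "\<dots> \<le> e * (\<bar>d1\<bar> + \<bar>d2\<bar>) * \<bar>d1\<bar>"
    using assms(2) by (intro mult_right_mono) (simp_all add: r1_def)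
  finally have r1: "r1 * d1 \<le> e * (\<bar>d1\<bar> + \<bar>d2\<bar>) * \<bar>d1\<bar>" .
  have "r2 * d2 \<le> \<bar>r2\<bar> * \<bar>d2\<bar>" by (metis abs_ge_self abs_mult)
  also have "\<dots> \<le> e * (\<bar>d1\<bar> + \<bar>d2\<bar>) * \<bar>d2\<bar>"
    using assms(3) by (intro mult_right_mono) (simp_all add: r2_def)
  finally have r2: "r2 * d2 \<le> e * (\<bar>d1\<bar> + \<bar>d2\<bar>) * \<bar>d2\<bar>" .
  have "r1 * d1 + r2 * d2 \<le> e * (\<bar>d1\<bar> + \<bar>d2\<bar>)\<^sup>2"
    using add_mono[OF r1 r2] by (simp add: power2_eq_square algebra_simps)
  also have "\<dots> \<le> e * (2 * (d1\<^sup>2 + d2\<^sup>2))"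
    using abs_add_squared_le assms(1) by (rule mult_left_mono)
  finally have "r1 * d1 + r2 * d2 \<le> 2 * e * (d1\<^sup>2 + d2\<^sup>2)" by (simp add: algebra_simps)
  moreover have "g1 * d1 + g2 * d2
      = (A * d1\<^sup>2 + (B + C) * d1 * d2 + D * d2\<^sup>2) + (r1 * d1 + r2 * d2)"
    by (simp add: r1_def r2_def power2_eq_square algebra_simps)
  moreover have "(2 * e - l) * (d1\<^sup>2 + d2\<^sup>2) = 2 * e * (d1\<^sup>2 + d2\<^sup>2) + - l * (d1\<^sup>2 + d2\<^sup>2)"
    by (simp add: algebra_simps)
  ultimately show ?thesis using assms(4) by linarith
qed


section \<open>Partial derivatives\<close>

lemma linearization_in_square:
  fixes F Fx Fy :: "real \<times> real \<Rightarrow> real"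
  assumes deriv_x: "\<And>x1 x2. \<bar>x1 - p1\<bar> \<le> \<delta> \<Longrightarrow> \<bar>x2 - p2\<bar> \<le> \<delta> \<Longrightarrow>
        ((\<lambda>t. F (t, x2)) has_real_derivative Fx (x1, x2)) (at x1)"
    and deriv_y: "\<And>x1 x2. \<bar>x1 - p1\<bar> \<le> \<delta> \<Longrightarrow> \<bar>x2 - p2\<bar> \<le> \<delta> \<Longrightarrow>
        ((\<lambda>t. F (x1, t)) has_real_derivative Fy (x1, x2)) (at x2)"
    and close_x: "\<And>x1 x2. \<bar>x1 - p1\<bar> \<le> \<delta> \<Longrightarrow> \<bar>x2 - p2\<bar> \<le> \<delta> \<Longrightarrow> \<bar>Fx (x1, x2) - cx\<bar> \<le> e"
    and close_y: "\<And>x1 x2. \<bar>x1 - p1\<bar> \<le> \<delta> \<Longrightarrow> \<bar>x2 - p2\<bar> \<le> \<delta> \<Longrightarrow> \<bar>Fy (x1, x2) - cy\<bar> \<le> e"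
    and x: "\<bar>x1 - p1\<bar> \<le> \<delta>" "\<bar>x2 - p2\<bar> \<le> \<delta>"
  shows "\<bar>F (x1, x2) - F (p1, p2) - (cx * (x1 - p1) + cy * (x2 - p2))\<bar>
           \<le> e * (\<bar>x1 - p1\<bar> + \<bar>x2 - p2\<bar>)"
proof -
  have p1: "\<bar>p1 - p1\<bar> \<le> \<delta>" using x by simp
  have seg1: "\<bar>s - p1\<bar> \<le> \<delta>" if "s \<in> closed_segment p1 x1" for s
    using abs_le_of_closed_segment[OF that p1 x(1)] .
  have seg2: "\<bar>s - p2\<bar> \<le> \<delta>" if "s \<in> closed_segment p2 x2" for s
    using abs_le_of_closed_segment[OF that _ x(2)] x(2) by simp
  have "\<bar>F (x1, x2) - F (p1, x2) - cx * (x1 - p1)\<bar> \<le> e * \<bar>x1 - p1\<bar>"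
    by (rule increment_le_of_derivative_close[where g' = "\<lambda>s. Fx (s, x2)"])
      (use deriv_x close_x seg1 x(2) in auto)
  moreover have "\<bar>F (p1, x2) - F (p1, p2) - cy * (x2 - p2)\<bar> \<le> e * \<bar>x2 - p2\<bar>"
    by (rule increment_le_of_derivative_close[where g' = "\<lambda>s. Fy (p1, s)"])
      (use deriv_y close_y seg2 p1 in auto)
  ultimately show ?thesis
    unfolding abs_le_iff by (simp add: algebra_simps)
qed

lemma Ck_Suc_imp_Ck: "Ck (Suc k) S f \<Longrightarrow> Ck k S f"
proof (induction k arbitrary: f)
  case 0
  then show ?case by (simp only: Ck.simps)
next
  case (Suc k)
  \<comment> \<open>Unfolding \<open>Ck\<close> by the simplifier in the presence of the induction hypothesis loops.\<close>
  show ?case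
    using iffD1[OF Ck.simps(2) Suc.prems] Suc.IH[of "pd1 f"] Suc.IH[of "pd2 f"]
    by (intro iffD2[OF Ck.simps(2)]) blast
qed

lemma Ck_Suc_pd: "Ck (Suc k) S f \<Longrightarrow> Ck k S (pd i f)"
  by (simp add: pd_def)

lemma Ck_Suc_has_partial_derivatives:
  assumes "Ck (Suc k) S f" "(x1, x2) \<in> S"
  shows "((\<lambda>t. f (t, x2)) has_real_derivative pd 0 f (x1, x2)) (at x1)"
    and "((\<lambda>t. f (x1, t)) has_real_derivative pd 1 f (x1, x2)) (at x2)"
proof -
  have "(\<lambda>t. f (t, x2)) differentiable (at x1) \<and> (\<lambda>t. f (x1, t)) differentiable (at x2)"
    using iffD1[OF Ck.simps(2) assms(1)] assms(2) by fastforce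
  then show "((\<lambda>t. f (t, x2)) has_real_derivative pd 0 f (x1, x2)) (at x1)"
    and "((\<lambda>t. f (x1, t)) has_real_derivative pd 1 f (x1, x2)) (at x2)"
    by (simp_all add: pd_def pd1_def pd2_def DERIV_deriv_iff_real_differentiable)
qed

lemma Ck_2_continuous_hessian:
  assumes "Ck 2 S f"
  shows "continuous_on S (\<lambda>x. hessian f x i j)"
proof -
  have "Ck 0 S (pd j (pd i f))"
    using assms by (intro Ck_Suc_pd) (simp add: numeral_2_eq_2 Ck_Suc_pd)
  then show ?thesis by (simp add: hessian_def)
qed

lemma Ck_2_partial_derivatives:
  assumes "Ck 2 S f" "(x1, x2) \<in> S"
  shows "((\<lambda>t. f (t, x2)) has_real_derivative pd 0 f (x1, x2)) (at x1)"
    and "((\<lambda>t. f (x1, t)) has_real_derivative pd 1 f (x1, x2)) (at x2)"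
    and "((\<lambda>t. pd i f (t, x2)) has_real_derivative hessian f (x1, x2) i 0) (at x1)"
    and "((\<lambda>t. pd i f (x1, t)) has_real_derivative hessian f (x1, x2) i 1) (at x2)"
proof -
  have C2: "Ck (Suc (Suc 0)) S f" using assms(1) by (simp add: numeral_2_eq_2)
  show "((\<lambda>t. f (t, x2)) has_real_derivative pd 0 f (x1, x2)) (at x1)"
    and "((\<lambda>t. f (x1, t)) has_real_derivative pd 1 f (x1, x2)) (at x2)"
    using Ck_Suc_has_partial_derivatives[OF C2 assms(2)] by simp_all
  show "((\<lambda>t. pd i f (t, x2)) has_real_derivative hessian f (x1, x2) i 0) (at x1)"
    and "((\<lambda>t. pd i f (x1, t)) has_real_derivative hessian f (x1, x2) i 1) (at x2)"
    using Ck_Suc_has_partial_derivatives[OF Ck_Suc_pd[OF C2] assms(2)] by (simp_all add: hessian_def)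
qed

lemma eventually_nhds_square:
  fixes p1 p2 :: real
  assumes "\<forall>\<^sub>F x in nhds (p1, p2). P x"
  shows "\<exists>\<delta>>0. \<forall>x1 x2. \<bar>x1 - p1\<bar> \<le> \<delta> \<longrightarrow> \<bar>x2 - p2\<bar> \<le> \<delta> \<longrightarrow> P (x1, x2)"
proof -
  obtain d where d: "0 < d" "\<And>x. dist x (p1, p2) < d \<Longrightarrow> P x"
    using assms unfolding eventually_nhds_metric by blast
  have "P (x1, x2)" if "\<bar>x1 - p1\<bar> \<le> d / 3" "\<bar>x2 - p2\<bar> \<le> d / 3" for x1 x2
  proof (rule d(2))
    have "dist (x1, x2) (p1, p2) \<le> \<bar>x1 - p1\<bar> + \<bar>x2 - p2\<bar>"
      using sqrt_sum_squares_le_sum_abs by (simp add: dist_Pair_Pair dist_real_def)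
    then show "dist (x1, x2) (p1, p2) < d" using that d(1) by linarith
  qed
  then show ?thesis using d(1) by (intro exI[of _ "d / 3"]) auto
qed

lemma eventually_nhds_close_of_continuous_on:
  fixes g :: "'a::metric_space \<Rightarrow> real"
  assumes "continuous_on S g" "open S" "x \<in> S" "0 < e"
  shows "\<forall>\<^sub>F y in nhds x. \<bar>g y - g x\<bar> < e"
proof -
  have "isCont g x" using assms(1-3) continuous_on_eq_continuous_at by blast
  then have "\<forall>\<^sub>F y in at x. \<bar>g y - g x\<bar> < e"
    using assms(4) by (auto simp: isCont_def tendsto_iff dist_real_def)
  then show ?thesis using assms(4) by (simp add: eventually_nhds_conv_at)
qed

lemma partial_derivatives_zero_at_local_max:
  assumes "((\<lambda>t. f (t, p2)) has_real_derivative d1) (at p1)"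
    and "((\<lambda>t. f (p1, t)) has_real_derivative d2) (at p2)"
    and "\<forall>\<^sub>F x in nhds (p1, p2). f x \<le> f (p1, p2)"
  shows "d1 = 0 \<and> d2 = 0"
proof -
  obtain \<delta> where "0 < \<delta>" and max: "\<And>x1 x2. \<bar>x1 - p1\<bar> \<le> \<delta> \<Longrightarrow> \<bar>x2 - p2\<bar> \<le> \<delta> \<Longrightarrow> f (x1, x2) \<le> f (p1, p2)"
    using eventually_nhds_square[OF assms(3)] by blast
  have "f (y, p2) \<le> f (p1, p2)" if "\<bar>p1 - y\<bar> < \<delta>" for y
    using max[of y p2] that \<open>0 < \<delta>\<close> by (simp add: abs_minus_commute)
  moreover have "f (p1, y) \<le> f (p1, p2)" if "\<bar>p2 - y\<bar> < \<delta>" for y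
    using max[of p1 y] that \<open>0 < \<delta>\<close> by (simp add: abs_minus_commute)
  ultimately show ?thesis
    using DERIV_local_max[OF assms(1) \<open>0 < \<delta>\<close>] DERIV_local_max[OF assms(2) \<open>0 < \<delta>\<close>] by blast
qed


section \<open>Grids\<close>

lemma grid_vertex_eq: "grid_vertex a b n i j = (real i * (a / real n), real j * (b / real n))"
  by (simp add: grid_vertex_def)

lemma grid_vertex_in_grid_circle:
  assumes "l \<le> n" "m \<le> n" "\<bar>real l - real i\<bar> \<le> real r" "\<bar>real m - real j\<bar> \<le> real r"
  shows "grid_vertex a b n l m \<in> grid_circle a b n r i j"
proof -
  have "real_of_int \<bar>int l - int i\<bar> \<le> real_of_int (int r)"
    and "real_of_int \<bar>int m - int j\<bar> \<le> real_of_int (int r)"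
    using assms(3,4) by simp_all
  then have "\<bar>int l - int i\<bar> \<le> int r" "\<bar>int m - int j\<bar> \<le> int r"
    by (simp_all only: of_int_le_iff)
  then show ?thesis using assms(1,2) by (auto simp: grid_circle_def)
qed

lemma grid_circleE:
  assumes "q \<in> grid_circle a b n r i j"
  obtains l m where "q = grid_vertex a b n l m" "l \<le> n" "m \<le> n"
    "\<bar>real l - real i\<bar> \<le> real r" "\<bar>real m - real j\<bar> \<le> real r"
proof -
  obtain l m where lm: "q = grid_vertex a b n l m" "l \<le> n" "m \<le> n"
      "\<bar>int l - int i\<bar> \<le> int r" "\<bar>int m - int j\<bar> \<le> int r"
    using assms by (auto simp: grid_circle_def)
  then have "real_of_int \<bar>int l - int i\<bar> \<le> real_of_int (int r)"
    and "real_of_int \<bar>int m - int j\<bar> \<le> real_of_int (int r)"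
    by (simp_all only: of_int_le_iff)
  then show ?thesis using lm that by simp
qed

lemma grid_circle_mono:
  assumes "r \<le> s"
  shows "grid_circle a b n r i j \<subseteq> grid_circle a b n s i j"
proof
  fix q assume "q \<in> grid_circle a b n r i j"
  then obtain l m where "q = grid_vertex a b n l m" "l \<le> n" "m \<le> n"
      "\<bar>real l - real i\<bar> \<le> real r" "\<bar>real m - real j\<bar> \<le> real r"
    by (rule grid_circleE)
  with assms show "q \<in> grid_circle a b n s i j"
    by (auto intro!: grid_vertex_in_grid_circle)
qed

lemma abs_grid_coordinate_diff: "0 \<le> h \<Longrightarrow> \<bar>real l * h - real i * h\<bar> = \<bar>real l - real i\<bar> * h"
  by (simp add: abs_mult left_diff_distrib[symmetric])

lemma grid_index_near:
  assumes "0 < h" "0 \<le> c" "c \<le> real n * h"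
  shows "\<exists>i\<le>n. \<bar>real i * h - c\<bar> \<le> h"
proof -
  define i where "i = nat \<lfloor>c / h\<rfloor>"
  have i: "real i \<le> c / h" "c / h < real i + 1"
    using assms by (simp_all add: i_def)
  have "c / h \<le> real n" using assms by (simp add: divide_le_eq)
  then have "i \<le> n" using i(1) by linarith
  moreover have "real i * h \<le> c" "c < (real i + 1) * h"
    using i assms(1) by (simp_all add: le_divide_eq divide_less_eq)
  ultimately show ?thesis by (intro exI[of _ i]) (auto simp: algebra_simps)
qed

lemma grid_index_step_toward:
  fixes h c \<rho> :: real
  assumes h: "0 < h" "h \<le> \<rho>" and c: "\<rho> < c" "c + \<rho> < real n * h"
    and i: "\<bar>real i * h - c\<bar> \<le> \<rho>"
  shows "\<exists>i'\<le>n. \<bar>real i' - real i\<bar> \<le> 1 \<and> \<bar>real i' * h - c\<bar> \<le> \<rho>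
            \<and> real i' * h = real i * h - h * sgn (real i * h - c)"
proof -
  have index_le: "k \<le> n" if "real k * h \<le> c + \<rho>" for k
  proof -
    have "real k * h < real n * h" using that c(2) by linarith
    then have "real k < real n" using h(1) by (simp add: mult_less_cancel_right)
    then show ?thesis by simp
  qed
  consider "c < real i * h" | "real i * h < c" | "real i * h = c" by linarith
  then show ?thesis
  proof cases
    case 1
    have "0 < i"
    proof (rule gr0I)
      assume "i = 0"
      with 1 c(1) h show False by simp
    qed
    then have step: "real (i - 1) * h = real i * h - h" by (simp add: of_nat_diff algebra_simps)
    show ?thesis
    proof (intro exI[of _ "i - 1"] conjI)
      show "i - 1 \<le> n" using 1 i h step unfolding abs_le_iff by (intro index_le) linarith
      show "\<bar>real (i - 1) - real i\<bar> \<le> 1" using \<open>0 < i\<close> by (simp add: of_nat_diff)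
      show "\<bar>real (i - 1) * h - c\<bar> \<le> \<rho>" using 1 h i unfolding step abs_le_iff by linarith
      show "real (i - 1) * h = real i * h - h * sgn (real i * h - c)" using 1 unfolding step by simp
    qed
  next
    case 2
    have step: "real (i + 1) * h = real i * h + h" by (simp add: algebra_simps)
    show ?thesis
    proof (intro exI[of _ "i + 1"] conjI)
      show "i + 1 \<le> n" using 2 h step by (intro index_le) linarith
      show "\<bar>real (i + 1) - real i\<bar> \<le> 1" by simp
      show "\<bar>real (i + 1) * h - c\<bar> \<le> \<rho>" using 2 h i unfolding step abs_le_iff by linarith
      show "real (i + 1) * h = real i * h - h * sgn (real i * h - c)" using 2 unfolding step by simp
    qed
  next
    case 3
    moreover have "i \<le> n" using 3 c h by (intro index_le) linarith
    ultimately show ?thesis using h by (intro exI[of _ i]) auto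
  qed
qed


section \<open>Grid maxima near a peak\<close>

text \<open>\<open>F1\<close> and \<open>F2\<close> stand for the partial derivatives of \<open>f\<close>. These bounds on the square of
  half-side \<open>\<delta>\<close> around the maximum \<open>(p1, p2)\<close> are all that the grid argument uses of \<open>f\<close>.\<close>

locale peak =
  fixes a b :: real and f F1 F2 :: "real \<times> real \<Rightarrow> real" and p1 p2 \<delta> M lam :: real
  assumes pos: "0 < \<delta>" "0 < M" "0 < lam"
    and square_inside: "\<delta> < p1" "p1 + \<delta> < a" "\<delta> < p2" "p2 + \<delta> < b"
    and taylor1: "\<And>x1 x2 y. \<bar>x1 - p1\<bar> \<le> \<delta> \<Longrightarrow> \<bar>x2 - p2\<bar> \<le> \<delta> \<Longrightarrow> \<bar>y - p1\<bar> \<le> \<delta> \<Longrightarrow>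
        \<bar>f (y, x2) - f (x1, x2) - F1 (x1, x2) * (y - x1)\<bar> \<le> M * (y - x1)\<^sup>2"
    and taylor2: "\<And>x1 x2 y. \<bar>x1 - p1\<bar> \<le> \<delta> \<Longrightarrow> \<bar>x2 - p2\<bar> \<le> \<delta> \<Longrightarrow> \<bar>y - p2\<bar> \<le> \<delta> \<Longrightarrow>
        \<bar>f (x1, y) - f (x1, x2) - F2 (x1, x2) * (y - x2)\<bar> \<le> M * (y - x2)\<^sup>2"
    and gradient_inward: "\<And>x1 x2. \<bar>x1 - p1\<bar> \<le> \<delta> \<Longrightarrow> \<bar>x2 - p2\<bar> \<le> \<delta> \<Longrightarrow>
        F1 (x1, x2) * (x1 - p1) + F2 (x1, x2) * (x2 - p2) \<le> - lam * ((x1 - p1)\<^sup>2 + (x2 - p2)\<^sup>2)"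
begin

definition square :: "real \<Rightarrow> (real \<times> real) set" where
  "square \<rho> = {p1 - \<rho>..p1 + \<rho>} \<times> {p2 - \<rho>..p2 + \<rho>}"

definition open_square :: "real \<Rightarrow> (real \<times> real) set" where
  "open_square \<rho> = {p1 - \<rho><..<p1 + \<rho>} \<times> {p2 - \<rho><..<p2 + \<rho>}"

lemma mem_square: "(x1, x2) \<in> square \<rho> \<longleftrightarrow> \<bar>x1 - p1\<bar> \<le> \<rho> \<and> \<bar>x2 - p2\<bar> \<le> \<rho>"
  by (auto simp: square_def abs_le_iff)

lemma mem_open_square: "(x1, x2) \<in> open_square \<rho> \<longleftrightarrow> \<bar>x1 - p1\<bar> < \<rho> \<and> \<bar>x2 - p2\<bar> < \<rho>"
  by (auto simp: open_square_def abs_less_iff)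

lemma open_open_square: "open (open_square \<rho>)"
  unfolding open_square_def by (intro open_Times open_greaterThanLessThan)

lemma centre_in_open_square: "0 < \<rho> \<Longrightarrow> (p1, p2) \<in> open_square \<rho>"
  by (simp add: mem_open_square)

lemma sides_pos: "0 < a" "0 < b"
  using pos square_inside by linarith+

lemma partial1_lower_bound:
  assumes n: "0 < n" "a / n \<le> \<delta>" and ij: "i \<le> n" "j \<le> n" "grid_vertex a b n i j \<in> square \<delta>"
    and dom: "\<And>q. q \<in> grid_circle a b n 1 i j \<Longrightarrow> q \<in> square \<delta> \<Longrightarrow> f q \<le> f (grid_vertex a b n i j)"
  shows "- M * (a / n) * \<bar>real i * (a / n) - p1\<bar> \<le> F1 (grid_vertex a b n i j) * (real i * (a / n) - p1)"
proof -
  define h x1 x2 where "h = a / n" and "x1 = real i * h" and "x2 = real j * (b / n)"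
  have v: "grid_vertex a b n i j = (x1, x2)" by (simp add: grid_vertex_eq h_def x1_def x2_def)
  have x: "\<bar>x1 - p1\<bar> \<le> \<delta>" "\<bar>x2 - p2\<bar> \<le> \<delta>" using ij(3) by (simp_all add: v mem_square)
  have h: "0 < h" "real n * h = a" using n sides_pos by (simp_all add: h_def)
  obtain i' where i': "i' \<le> n" "\<bar>real i' - real i\<bar> \<le> 1" "\<bar>real i' * h - p1\<bar> \<le> \<delta>"
      and step: "real i' * h - x1 = - h * sgn (x1 - p1)"
    using grid_index_step_toward[of h \<delta> p1 n i] h n(2) square_inside x(1)
    by (auto simp: h_def x1_def)
  have "grid_vertex a b n i' j \<in> grid_circle a b n 1 i j"
    using i' ij by (intro grid_vertex_in_grid_circle) auto
  moreover have "grid_vertex a b n i' j \<in> square \<delta>"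
    using i'(3) x(2) by (simp add: grid_vertex_eq mem_square h_def x2_def)
  ultimately have "f (real i' * h, x2) \<le> f (x1, x2)"
    using dom by (simp add: grid_vertex_eq h_def x1_def x2_def)
  moreover have "\<bar>f (real i' * h, x2) - f (x1, x2) - F1 (x1, x2) * (real i' * h - x1)\<bar>
      \<le> M * (real i' * h - x1)\<^sup>2"
    using taylor1 x i'(3) by blast
  ultimately show ?thesis
    using slope_bound_from_descent_step[of _ _ "F1 (x1, x2)" h "x1 - p1" M] step h(1)
    by (simp add: v x1_def h_def)
qed

lemma partial2_lower_bound:
  assumes n: "0 < n" "b / n \<le> \<delta>" and ij: "i \<le> n" "j \<le> n" "grid_vertex a b n i j \<in> square \<delta>"
    and dom: "\<And>q. q \<in> grid_circle a b n 1 i j \<Longrightarrow> q \<in> square \<delta> \<Longrightarrow> f q \<le> f (grid_vertex a b n i j)"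
  shows "- M * (b / n) * \<bar>real j * (b / n) - p2\<bar> \<le> F2 (grid_vertex a b n i j) * (real j * (b / n) - p2)"
proof -
  define h x1 x2 where "h = b / n" and "x1 = real i * (a / n)" and "x2 = real j * h"
  have v: "grid_vertex a b n i j = (x1, x2)" by (simp add: grid_vertex_eq h_def x1_def x2_def)
  have x: "\<bar>x1 - p1\<bar> \<le> \<delta>" "\<bar>x2 - p2\<bar> \<le> \<delta>" using ij(3) by (simp_all add: v mem_square)
  have h: "0 < h" "real n * h = b" using n sides_pos by (simp_all add: h_def)
  obtain j' where j': "j' \<le> n" "\<bar>real j' - real j\<bar> \<le> 1" "\<bar>real j' * h - p2\<bar> \<le> \<delta>"
      and step: "real j' * h - x2 = - h * sgn (x2 - p2)"
    using grid_index_step_toward[of h \<delta> p2 n j] h n(2) square_inside x(2)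
    by (auto simp: h_def x2_def)
  have "grid_vertex a b n i j' \<in> grid_circle a b n 1 i j"
    using j' ij by (intro grid_vertex_in_grid_circle) auto
  moreover have "grid_vertex a b n i j' \<in> square \<delta>"
    using j'(3) x(1) by (simp add: grid_vertex_eq mem_square h_def x1_def)
  ultimately have "f (x1, real j' * h) \<le> f (x1, x2)"
    using dom by (simp add: grid_vertex_eq h_def x1_def x2_def)
  moreover have "\<bar>f (x1, real j' * h) - f (x1, x2) - F2 (x1, x2) * (real j' * h - x2)\<bar>
      \<le> M * (real j' * h - x2)\<^sup>2"
    using taylor2 x j'(3) by blast
  ultimately show ?thesis
    using slope_bound_from_descent_step[of _ _ "F2 (x1, x2)" h "x2 - p2" M] step h(1)
    by (simp add: v x2_def h_def)
qed

lemma dominant_vertex_near_peak: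
  assumes n: "0 < n" "max (a / n) (b / n) \<le> \<delta>"
    and ij: "i \<le> n" "j \<le> n" "grid_vertex a b n i j \<in> square \<delta>"
    and dom: "\<And>q. q \<in> grid_circle a b n 1 i j \<Longrightarrow> q \<in> square \<delta> \<Longrightarrow> f q \<le> f (grid_vertex a b n i j)"
  shows "\<bar>real i * (a / n) - p1\<bar> + \<bar>real j * (b / n) - p2\<bar> \<le> 2 * M * max (a / n) (b / n) / lam"
proof -
  define h d1 d2 where "h = max (a / n) (b / n)"
    and "d1 = real i * (a / n) - p1" and "d2 = real j * (b / n) - p2"
  let ?v = "grid_vertex a b n i j"
  have v: "?v = (d1 + p1, d2 + p2)" by (simp add: grid_vertex_eq d1_def d2_def)
  have "M * (a / n) * \<bar>d1\<bar> \<le> M * h * \<bar>d1\<bar>"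
    using pos(2) by (intro mult_right_mono mult_left_mono) (auto simp: h_def)
  moreover have "M * (b / n) * \<bar>d2\<bar> \<le> M * h * \<bar>d2\<bar>"
    using pos(2) by (intro mult_right_mono mult_left_mono) (auto simp: h_def)
  moreover have "- M * (a / n) * \<bar>d1\<bar> \<le> F1 ?v * d1" "- M * (b / n) * \<bar>d2\<bar> \<le> F2 ?v * d2"
    using partial1_lower_bound[OF n(1) _ ij dom] partial2_lower_bound[OF n(1) _ ij dom] n(2)
    by (simp_all add: d1_def d2_def)
  moreover have "F1 ?v * d1 + F2 ?v * d2 \<le> - lam * (d1\<^sup>2 + d2\<^sup>2)"
    using gradient_inward[of "d1 + p1" "d2 + p2"] ij(3) unfolding v by (simp add: mem_square)
  ultimately have "lam * (d1\<^sup>2 + d2\<^sup>2) \<le> M * h * (\<bar>d1\<bar> + \<bar>d2\<bar>)"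
    by (simp add: algebra_simps)
  moreover have "0 \<le> M * h" using pos(2) sides_pos n(1) by (simp add: h_def le_max_iff_disj)
  ultimately show ?thesis
    using abs_add_le_of_sum_squares_le pos(3) by (simp add: d1_def d2_def h_def mult.assoc)
qed

text \<open>With mesh \<open>h\<close>, a circle of radius \<open>r\<close> around a vertex of the half-size square stays inside
  the square, and two vertices within \<open>2 M h / lam\<close> of the peak are at most \<open>r\<close> steps apart.\<close>

definition fine_grid :: "nat \<Rightarrow> nat \<Rightarrow> bool" where
  "fine_grid n r \<longleftrightarrow> 0 < n \<and> 1 \<le> r \<and> real r * max (a / n) (b / n) \<le> \<delta> / 2
     \<and> 4 * M * max (a / n) (b / n) / lam \<le> real r * min (a / n) (b / n)"

lemma fine_grid_mesh:
  assumes "fine_grid n r"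
  shows "0 < n" "1 \<le> r" "0 < a / n" "0 < b / n" "max (a / n) (b / n) \<le> \<delta> / 2"
    and "real r * (a / n) \<le> \<delta> / 2" "real r * (b / n) \<le> \<delta> / 2"
    and "2 * M * max (a / n) (b / n) / lam < \<delta> / 2"
proof -
  let ?h = "max (a / n) (b / n)"
  show n: "0 < n" "1 \<le> r" "0 < a / n" "0 < b / n"
    using assms sides_pos by (simp_all add: fine_grid_def)
  have r: "real r * ?h \<le> \<delta> / 2" using assms by (simp add: fine_grid_def)
  have "real r * (a / n) \<le> real r * ?h" by (intro mult_left_mono) auto
  then show "real r * (a / n) \<le> \<delta> / 2" using r by linarith
  have "real r * (b / n) \<le> real r * ?h" by (intro mult_left_mono) auto
  then show "real r * (b / n) \<le> \<delta> / 2" using r by linarith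
  have "?h \<le> real r * ?h" using n by (intro mult_le_cancel_right1[THEN iffD2]) simp
  then show "?h \<le> \<delta> / 2" using r by linarith
  have "real r * min (a / n) (b / n) \<le> real r * ?h" by (intro mult_left_mono) auto
  moreover have "4 * M * ?h / lam \<le> real r * min (a / n) (b / n)"
    using assms by (simp add: fine_grid_def)
  ultimately have "4 * M * ?h / lam \<le> \<delta> / 2" using r by linarith
  then show "2 * M * ?h / lam < \<delta> / 2" using pos by simp
qed

lemma square_maximiser_exists:
  assumes n: "0 < n" "a / n \<le> \<delta>" "b / n \<le> \<delta>"
  obtains i j where "i \<le> n" "j \<le> n" "grid_vertex a b n i j \<in> square \<delta>"
    "\<And>l m. l \<le> n \<Longrightarrow> m \<le> n \<Longrightarrow> grid_vertex a b n l m \<in> square \<delta> \<Longrightarrow>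
       f (grid_vertex a b n l m) \<le> f (grid_vertex a b n i j)"
proof -
  define K where "K = {(i, j). i \<le> n \<and> j \<le> n \<and> grid_vertex a b n i j \<in> square \<delta>}"
  define g where "g = (\<lambda>(i, j). f (grid_vertex a b n i j))"
  have "finite K" by (rule finite_subset[of _ "{..n} \<times> {..n}"]) (auto simp: K_def)
  obtain i0 where i0: "i0 \<le> n" "\<bar>real i0 * (a / n) - p1\<bar> \<le> a / n"
    using grid_index_near[of "a / n" p1 n] n(1) sides_pos square_inside pos(1) by auto
  obtain j0 where j0: "j0 \<le> n" "\<bar>real j0 * (b / n) - p2\<bar> \<le> b / n"
    using grid_index_near[of "b / n" p2 n] n(1) sides_pos square_inside pos(1) by auto
  have "\<bar>real i0 * (a / n) - p1\<bar> \<le> \<delta>" "\<bar>real j0 * (b / n) - p2\<bar> \<le> \<delta>"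
    using i0 j0 n by linarith+
  then have "(i0, j0) \<in> K" using i0 j0 by (simp add: K_def grid_vertex_eq mem_square)
  then have "Max (g ` K) \<in> g ` K" using \<open>finite K\<close> by (intro Max_in) auto
  then obtain i j where ij: "(i, j) \<in> K" and max: "g (i, j) = Max (g ` K)" by auto
  have "g (l, m) \<le> g (i, j)" if "(l, m) \<in> K" for l m
    using \<open>finite K\<close> that by (simp add: max)
  with ij show ?thesis using that by (auto simp: K_def g_def)
qed

lemma circle_max_exists:
  assumes "fine_grid n r"
  obtains i j where "i \<le> n" "j \<le> n" "grid_vertex a b n i j \<in> open_square (\<delta> / 2)"
    "maximal_in_circle a b f n r i j"
proof -
  note mesh = fine_grid_mesh[OF assms]
  have "a / n \<le> \<delta>" "b / n \<le> \<delta>"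
    using mesh(5) pos(1) max.cobounded1[of "a / n" "b / n"] max.cobounded2[of "b / n" "a / n"]
    by linarith+
  then obtain i j where ij: "i \<le> n" "j \<le> n" "grid_vertex a b n i j \<in> square \<delta>"
    and max: "\<And>l m. l \<le> n \<Longrightarrow> m \<le> n \<Longrightarrow> grid_vertex a b n l m \<in> square \<delta> \<Longrightarrow>
       f (grid_vertex a b n l m) \<le> f (grid_vertex a b n i j)"
    using square_maximiser_exists mesh(1) by blast
  have dom: "f q \<le> f (grid_vertex a b n i j)"
    if q: "q \<in> grid_circle a b n r' i j" and sq: "q \<in> square \<delta>" for q r'
    using q by (elim grid_circleE) (use sq max in blast)
  have near: "\<bar>real i * (a / n) - p1\<bar> + \<bar>real j * (b / n) - p2\<bar> < \<delta> / 2"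
    using dominant_vertex_near_peak[OF mesh(1) _ ij dom] mesh(5,8) pos(1) by fastforce
  then have near1: "\<bar>real i * (a / n) - p1\<bar> < \<delta> / 2"
    and near2: "\<bar>real j * (b / n) - p2\<bar> < \<delta> / 2"
    by linarith+
  then have "grid_vertex a b n i j \<in> open_square (\<delta> / 2)"
    by (simp add: grid_vertex_eq mem_open_square)
  moreover have "maximal_in_circle a b f n r i j"
    unfolding maximal_in_circle_def
  proof
    fix q assume q: "q \<in> grid_circle a b n r i j"
    then obtain l m where lm: "q = grid_vertex a b n l m"
        "\<bar>real l - real i\<bar> \<le> real r" "\<bar>real m - real j\<bar> \<le> real r"
      by (blast elim: grid_circleE)
    have "\<bar>real l * (a / n) - real i * (a / n)\<bar> \<le> real r * (a / n)"
      unfolding abs_grid_coordinate_diff[OF less_imp_le[OF mesh(3)]]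
      using lm(2) mesh(3) by (intro mult_right_mono) auto
    moreover have "\<bar>real m * (b / n) - real j * (b / n)\<bar> \<le> real r * (b / n)"
      unfolding abs_grid_coordinate_diff[OF less_imp_le[OF mesh(4)]]
      using lm(3) mesh(4) by (intro mult_right_mono) auto
    ultimately have "\<bar>real l * (a / n) - p1\<bar> \<le> \<delta>" "\<bar>real m * (b / n) - p2\<bar> \<le> \<delta>"
      using near1 near2 mesh(6,7)
        dist_triangle[of "real l * (a / n)" p1 "real i * (a / n)", unfolded dist_real_def]
        dist_triangle[of "real m * (b / n)" p2 "real j * (b / n)", unfolded dist_real_def]
      by linarith+
    then have "q \<in> square \<delta>" by (simp add: lm(1) grid_vertex_eq mem_square)
    with q show "f q \<le> f (grid_vertex a b n i j)" by (rule dom)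
  qed
  ultimately show ?thesis using ij that by blast
qed

lemma circle_max_near_peak:
  assumes fine: "fine_grid n r"
    and ij: "i \<le> n" "j \<le> n" "grid_vertex a b n i j \<in> open_square (\<delta> / 2)"
      "maximal_in_circle a b f n r i j"
  shows "\<bar>real i * (a / n) - p1\<bar> + \<bar>real j * (b / n) - p2\<bar> \<le> 2 * M * max (a / n) (b / n) / lam"
proof (rule dominant_vertex_near_peak)
  note mesh = fine_grid_mesh[OF fine]
  show "0 < n" "i \<le> n" "j \<le> n" using mesh(1) ij by simp_all
  show "max (a / n) (b / n) \<le> \<delta>" using mesh(5) pos(1) by linarith
  show "grid_vertex a b n i j \<in> square \<delta>"
    using ij(3) pos(1) by (simp add: grid_vertex_eq mem_square mem_open_square)
  show "f q \<le> f (grid_vertex a b n i j)" if "q \<in> grid_circle a b n 1 i j" for q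
    using ij(4) grid_circle_mono[OF mesh(2)] that unfolding maximal_in_circle_def by blast
qed

lemma circle_max_unique:
  assumes fine: "fine_grid n r" and nd: "nondegenerate a b f n"
    and ij: "i \<le> n" "j \<le> n" "grid_vertex a b n i j \<in> open_square (\<delta> / 2)"
      "maximal_in_circle a b f n r i j"
    and lm: "l \<le> n" "m \<le> n" "grid_vertex a b n l m \<in> open_square (\<delta> / 2)"
      "maximal_in_circle a b f n r l m"
  shows "i = l \<and> j = m"
proof -
  note mesh = fine_grid_mesh[OF fine]
  let ?h = "max (a / n) (b / n)"
  have "4 * M * ?h / lam \<le> real r * min (a / n) (b / n)" using fine by (simp add: fine_grid_def)
  moreover have "real r * min (a / n) (b / n) \<le> real r * (a / n)" by (intro mult_left_mono) auto
  moreover have "real r * min (a / n) (b / n) \<le> real r * (b / n)" by (intro mult_left_mono) auto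
  ultimately have bound: "4 * M * ?h / lam \<le> real r * (a / n)" "4 * M * ?h / lam \<le> real r * (b / n)"
    by linarith+
  have near: "\<bar>real i * (a / n) - p1\<bar> + \<bar>real j * (b / n) - p2\<bar> \<le> 2 * M * ?h / lam"
      "\<bar>real l * (a / n) - p1\<bar> + \<bar>real m * (b / n) - p2\<bar> \<le> 2 * M * ?h / lam"
    using circle_max_near_peak[OF fine ij] circle_max_near_peak[OF fine lm] .
  have twice: "4 * M * ?h / lam = 2 * (2 * M * ?h / lam)" by simp
  have "\<bar>real l - real i\<bar> * (a / n) \<le> real r * (a / n)"
    using near twice bound(1) abs_minus_commute[of p1 "real i * (a / n)"]
      abs_ge_zero[of "real j * (b / n) - p2"] abs_ge_zero[of "real m * (b / n) - p2"]
      dist_triangle[of "real l * (a / n)" "real i * (a / n)" p1, unfolded dist_real_def]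
    unfolding abs_grid_coordinate_diff[OF less_imp_le[OF mesh(3)], symmetric] by linarith
  then have di: "\<bar>real l - real i\<bar> \<le> real r" using mesh(3) by (rule mult_right_le_imp_le)
  have "\<bar>real m - real j\<bar> * (b / n) \<le> real r * (b / n)"
    using near twice bound(2) abs_minus_commute[of p2 "real j * (b / n)"]
      abs_ge_zero[of "real i * (a / n) - p1"] abs_ge_zero[of "real l * (a / n) - p1"]
      dist_triangle[of "real m * (b / n)" "real j * (b / n)" p2, unfolded dist_real_def]
    unfolding abs_grid_coordinate_diff[OF less_imp_le[OF mesh(4)], symmetric] by linarith
  then have dj: "\<bar>real m - real j\<bar> \<le> real r" using mesh(4) by (rule mult_right_le_imp_le)
  have "grid_vertex a b n l m \<in> grid_circle a b n r i j"
    using lm(1,2) di dj by (rule grid_vertex_in_grid_circle)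
  moreover have "grid_vertex a b n i j \<in> grid_circle a b n r l m"
    using ij(1,2) di dj by (intro grid_vertex_in_grid_circle) (simp_all add: abs_minus_commute)
  ultimately have "f (grid_vertex a b n l m) = f (grid_vertex a b n i j)"
    using ij(4) lm(4) by (simp add: maximal_in_circle_def antisym)
  then have "grid_vertex a b n i j = grid_vertex a b n l m"
    using nd ij(1,2) lm(1,2) unfolding nondegenerate_def by metis
  then show ?thesis using mesh(1) sides_pos by (simp add: grid_vertex_eq)
qed

lemma eventually_fine_grid: "\<exists>r. \<forall>\<^sub>F n in sequentially. fine_grid n r"
proof -
  obtain k :: nat where k: "4 * M * max a b / (lam * min a b) \<le> real k"
    using real_arch_simple by blast
  define r where "r = Suc k"
  have r: "1 \<le> r" "4 * M * max a b / (lam * min a b) \<le> real r" using k by (simp_all add: r_def)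
  have "0 < \<delta> / (2 * real r)" using pos(1) r(1) by simp
  then have "\<forall>\<^sub>F n in sequentially. max a b / real n < \<delta> / (2 * real r)"
    by (rule order_tendstoD(2)[OF lim_const_over_n])
  moreover have "\<forall>\<^sub>F n in sequentially. 0 < n" by (rule eventually_gt_at_top)
  ultimately have "\<forall>\<^sub>F n in sequentially. fine_grid n r"
  proof eventually_elim
    case (elim n)
    have h: "max (a / n) (b / n) = max a b / n" "min (a / n) (b / n) = min a b / n"
      by (simp_all add: max_divide_distrib_right min_divide_distrib_right)
    have "real r * (max a b / n) \<le> real r * (\<delta> / (2 * real r))"
      using elim(1) by (intro mult_left_mono) auto
    also have "\<dots> = \<delta> / 2" using r(1) by simp
    finally have mesh: "real r * max (a / n) (b / n) \<le> \<delta> / 2" by (simp only: h)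
    have "4 * M * (max a b / n) / lam = 4 * M * max a b / (lam * min a b) * (min a b / n)"
      using sides_pos pos(3) by (simp add: field_simps)
    also have "\<dots> \<le> real r * (min a b / n)"
      using r(2) sides_pos by (intro mult_right_mono) auto
    finally have "4 * M * max (a / n) (b / n) / lam \<le> real r * min (a / n) (b / n)" by (simp only: h)
    with mesh elim(2) r(1) show ?case by (simp add: fine_grid_def)
  qed
  then show ?thesis ..
qed

lemma unique_circle_max_eventually:
  "\<exists>r::nat. r > 0 \<and> (\<exists>N. \<forall>n\<ge>N. nondegenerate a b f n \<longrightarrow>
     (\<exists>!ij. fst ij \<le> n \<and> snd ij \<le> n \<and> grid_vertex a b n (fst ij) (snd ij) \<in> open_square (\<delta> / 2)
        \<and> maximal_in_circle a b f n r (fst ij) (snd ij)))"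
proof -
  obtain r where "\<forall>\<^sub>F n in sequentially. fine_grid n r" using eventually_fine_grid ..
  then obtain N where fine: "\<And>n. N \<le> n \<Longrightarrow> fine_grid n r" by (auto simp: eventually_sequentially)
  have "\<exists>!ij. fst ij \<le> n \<and> snd ij \<le> n \<and> grid_vertex a b n (fst ij) (snd ij) \<in> open_square (\<delta> / 2)
        \<and> maximal_in_circle a b f n r (fst ij) (snd ij)"
    if n: "N \<le> n" and nd: "nondegenerate a b f n" for n
  proof -
    obtain i j where ij: "i \<le> n" "j \<le> n" "grid_vertex a b n i j \<in> open_square (\<delta> / 2)"
        "maximal_in_circle a b f n r i j"
      using circle_max_exists[OF fine[OF n]] .
    show ?thesis
    proof (rule ex1I[of _ "(i, j)"])
      fix ij' assume "fst ij' \<le> n \<and> snd ij' \<le> n \<and> grid_vertex a b n (fst ij') (snd ij') \<in> open_square (\<delta> / 2)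
        \<and> maximal_in_circle a b f n r (fst ij') (snd ij')"
      then have "i = fst ij' \<and> j = snd ij'"
        using circle_max_unique[OF fine[OF n] nd ij] by blast
      then show "ij' = (i, j)" by (simp add: prod_eq_iff)
    qed (use ij in simp)
  qed
  moreover have "0 < r" using fine_grid_mesh(2)[OF fine[of N]] by simp
  ultimately show ?thesis by blast
qed


end


section \<open>A nondegenerate maximum is a peak\<close>

lemma hessian_close_in_square:
  assumes C2: "Ck 2 S f" and S: "open S" "(p1, p2) \<in> S" and "0 < e"
  shows "\<exists>\<delta>>0. \<forall>x1 x2. \<bar>x1 - p1\<bar> \<le> \<delta> \<longrightarrow> \<bar>x2 - p2\<bar> \<le> \<delta> \<longrightarrow>
           (x1, x2) \<in> S \<and> (\<forall>i<2. \<forall>j<2. \<bar>hessian f (x1, x2) i j - hessian f (p1, p2) i j\<bar> < e)"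
proof (rule eventually_nhds_square)
  have "\<forall>\<^sub>F x in nhds (p1, p2). x \<in> S" using S by (rule eventually_nhds_in_open)
  moreover have "\<forall>\<^sub>F x in nhds (p1, p2). \<forall>ij\<in>{..<2} \<times> {..<2}.
      \<bar>hessian f x (fst ij) (snd ij) - hessian f (p1, p2) (fst ij) (snd ij)\<bar> < e"
    using eventually_nhds_close_of_continuous_on[OF Ck_2_continuous_hessian[OF C2] S \<open>0 < e\<close>]
    by (intro eventually_ball_finite) auto
  ultimately show "\<forall>\<^sub>F x in nhds (p1, p2). x \<in> S
      \<and> (\<forall>i<2. \<forall>j<2. \<bar>hessian f x i j - hessian f (p1, p2) i j\<bar> < e)"
    by eventually_elim auto
qed

lemma axis_taylor_bounds_in_square:
  assumes C2: "Ck 2 S f"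
    and in_S: "\<And>x1 x2. \<bar>x1 - p1\<bar> \<le> \<delta> \<Longrightarrow> \<bar>x2 - p2\<bar> \<le> \<delta> \<Longrightarrow> (x1, x2) \<in> S"
    and bounded: "\<And>i x1 x2. i < 2 \<Longrightarrow> \<bar>x1 - p1\<bar> \<le> \<delta> \<Longrightarrow> \<bar>x2 - p2\<bar> \<le> \<delta> \<Longrightarrow>
        \<bar>hessian f (x1, x2) i i\<bar> \<le> M"
    and x: "\<bar>x1 - p1\<bar> \<le> \<delta>" "\<bar>x2 - p2\<bar> \<le> \<delta>"
  shows "\<bar>y - p1\<bar> \<le> \<delta> \<Longrightarrow> \<bar>f (y, x2) - f (x1, x2) - pd 0 f (x1, x2) * (y - x1)\<bar> \<le> M * (y - x1)\<^sup>2"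
    and "\<bar>y - p2\<bar> \<le> \<delta> \<Longrightarrow> \<bar>f (x1, y) - f (x1, x2) - pd 1 f (x1, x2) * (y - x2)\<bar> \<le> M * (y - x2)\<^sup>2"
proof -
  note D = Ck_2_partial_derivatives[OF C2 in_S]
  assume y: "\<bar>y - p1\<bar> \<le> \<delta>"
  have seg: "\<bar>s - p1\<bar> \<le> \<delta>" if "s \<in> closed_segment x1 y" for s
    using abs_le_of_closed_segment[OF that x(1) y] .
  show "\<bar>f (y, x2) - f (x1, x2) - pd 0 f (x1, x2) * (y - x1)\<bar> \<le> M * (y - x1)\<^sup>2"
    by (rule second_order_taylor_bound[where g' = "\<lambda>t. pd 0 f (t, x2)" and g'' = "\<lambda>t. hessian f (t, x2) 0 0"])
      (use D bounded[of 0] seg x(2) in auto)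
next
  note D = Ck_2_partial_derivatives[OF C2 in_S]
  assume y: "\<bar>y - p2\<bar> \<le> \<delta>"
  have seg: "\<bar>s - p2\<bar> \<le> \<delta>" if "s \<in> closed_segment x2 y" for s
    using abs_le_of_closed_segment[OF that x(2) y] .
  show "\<bar>f (x1, y) - f (x1, x2) - pd 1 f (x1, x2) * (y - x2)\<bar> \<le> M * (y - x2)\<^sup>2"
    by (rule second_order_taylor_bound[where g' = "\<lambda>t. pd 1 f (x1, t)" and g'' = "\<lambda>t. hessian f (x1, t) 1 1"])
      (use D bounded[of 1] seg x(1) in auto)
qed

lemma gradient_inward_in_square:
  assumes C2: "Ck 2 S f"
    and in_S: "\<And>x1 x2. \<bar>x1 - p1\<bar> \<le> \<delta> \<Longrightarrow> \<bar>x2 - p2\<bar> \<le> \<delta> \<Longrightarrow> (x1, x2) \<in> S"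
    and close: "\<And>i j x1 x2. i < 2 \<Longrightarrow> j < 2 \<Longrightarrow> \<bar>x1 - p1\<bar> \<le> \<delta> \<Longrightarrow> \<bar>x2 - p2\<bar> \<le> \<delta> \<Longrightarrow>
        \<bar>hessian f (x1, x2) i j - H i j\<bar> \<le> e"
    and crit: "pd 0 f (p1, p2) = 0" "pd 1 f (p1, p2) = 0"
    and quadratic: "\<And>x y. H 0 0 * x\<^sup>2 + (H 0 1 + H 1 0) * x * y + H 1 1 * y\<^sup>2 \<le> - l * (x\<^sup>2 + y\<^sup>2)"
    and "0 \<le> e" and x: "\<bar>x1 - p1\<bar> \<le> \<delta>" "\<bar>x2 - p2\<bar> \<le> \<delta>"
  shows "pd 0 f (x1, x2) * (x1 - p1) + pd 1 f (x1, x2) * (x2 - p2)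
           \<le> (2 * e - l) * ((x1 - p1)\<^sup>2 + (x2 - p2)\<^sup>2)"
proof -
  have "\<bar>pd i f (x1, x2) - (H i 0 * (x1 - p1) + H i 1 * (x2 - p2))\<bar> \<le> e * (\<bar>x1 - p1\<bar> + \<bar>x2 - p2\<bar>)"
    if "i < 2" for i
  proof -
    have "pd i f (p1, p2) = 0" using crit that by (auto simp: less_2_cases_iff)
    moreover have "\<bar>pd i f (x1, x2) - pd i f (p1, p2) - (H i 0 * (x1 - p1) + H i 1 * (x2 - p2))\<bar>
        \<le> e * (\<bar>x1 - p1\<bar> + \<bar>x2 - p2\<bar>)"
      by (rule linearization_in_square[where Fx = "\<lambda>x. hessian f x i 0" and Fy = "\<lambda>x. hessian f x i 1"])
        (use Ck_2_partial_derivatives[OF C2 in_S] close that x in auto)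
    ultimately show ?thesis by simp
  qed
  from this[of 0] this[of 1] show ?thesis
    using quadratic \<open>0 \<le> e\<close> by (intro inner_le_of_linearization) auto
qed

lemma peak_at_nondegenerate_critical_point:
  assumes C2: "Ck 2 ({0<..<a} \<times> {0<..<b}) f"
    and p: "(p1, p2) \<in> {0<..<a} \<times> {0<..<b}"
    and crit: "pd 0 f (p1, p2) = 0" "pd 1 f (p1, p2) = 0"
    and negdef: "negative_definite (hessian f (p1, p2))"
  shows "\<exists>\<delta> M lam. peak a b f (pd 0 f) (pd 1 f) p1 p2 \<delta> M lam"
proof -
  let ?S = "{0<..<a} \<times> {0<..<b}" and ?H = "hessian f (p1, p2)"
  obtain l where l: "0 < l"
    "\<And>x y. ?H 0 0 * x\<^sup>2 + (?H 0 1 + ?H 1 0) * x * y + ?H 1 1 * y\<^sup>2 \<le> - l * (x\<^sup>2 + y\<^sup>2)"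
    using quadratic_form_le_neg_sum_squares negative_definite_quadratic_form[OF negdef] by blast
  have "open ?S" by (intro open_Times open_greaterThanLessThan)
  then obtain \<delta> where "0 < \<delta>" and square: "\<And>x1 x2. \<bar>x1 - p1\<bar> \<le> \<delta> \<Longrightarrow> \<bar>x2 - p2\<bar> \<le> \<delta> \<Longrightarrow>
      (x1, x2) \<in> ?S \<and> (\<forall>i<2. \<forall>j<2. \<bar>hessian f (x1, x2) i j - ?H i j\<bar> < l / 4)"
    using hessian_close_in_square[OF C2 _ p, of "l / 4"] l(1) by auto
  have in_S: "(x1, x2) \<in> ?S" if "\<bar>x1 - p1\<bar> \<le> \<delta>" "\<bar>x2 - p2\<bar> \<le> \<delta>" for x1 x2
    using square[OF that] by blast
  have close: "\<bar>hessian f (x1, x2) i j - ?H i j\<bar> \<le> l / 4"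
    if "i < 2" "j < 2" "\<bar>x1 - p1\<bar> \<le> \<delta>" "\<bar>x2 - p2\<bar> \<le> \<delta>" for i j x1 x2
    using square[OF that(3,4)] that(1,2) by (simp add: less_imp_le)
  define M where "M = \<bar>?H 0 0\<bar> + \<bar>?H 1 1\<bar> + l"
  have bounded: "\<bar>hessian f (x1, x2) i i\<bar> \<le> M"
    if "i < 2" "\<bar>x1 - p1\<bar> \<le> \<delta>" "\<bar>x2 - p2\<bar> \<le> \<delta>" for i x1 x2
  proof -
    have "\<bar>?H i i\<bar> \<le> \<bar>?H 0 0\<bar> + \<bar>?H 1 1\<bar>" using that(1) by (auto simp: less_2_cases_iff)
    then show ?thesis
      using close[OF that(1,1,2,3)] abs_triangle_ineq2[of "hessian f (x1, x2) i i" "?H i i"] l(1)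
      by (simp add: M_def)
  qed
  have "(p1 - \<delta>, p2) \<in> ?S" "(p1 + \<delta>, p2) \<in> ?S" "(p1, p2 - \<delta>) \<in> ?S" "(p1, p2 + \<delta>) \<in> ?S"
    using in_S[of "p1 - \<delta>" p2] in_S[of "p1 + \<delta>" p2] in_S[of p1 "p2 - \<delta>"] in_S[of p1 "p2 + \<delta>"]
      \<open>0 < \<delta>\<close>
    by simp_all
  then have "\<delta> < p1" "p1 + \<delta> < a" "\<delta> < p2" "p2 + \<delta> < b" by auto
  moreover have "0 < M" using l(1) by (simp add: M_def)
  moreover have "pd 0 f (x1, x2) * (x1 - p1) + pd 1 f (x1, x2) * (x2 - p2)
      \<le> - (l / 2) * ((x1 - p1)\<^sup>2 + (x2 - p2)\<^sup>2)"
    if "\<bar>x1 - p1\<bar> \<le> \<delta>" "\<bar>x2 - p2\<bar> \<le> \<delta>" for x1 x2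
    using gradient_inward_in_square[OF C2 in_S close crit l(2) _ that] l(1) by simp
  ultimately have "peak a b f (pd 0 f) (pd 1 f) p1 p2 \<delta> M (l / 2)"
    using \<open>0 < \<delta>\<close> l(1) axis_taylor_bounds_in_square[OF C2 in_S bounded]
    by unfold_locales auto
  then show ?thesis by blast
qed

theorem theorem1:
  fixes a b :: real and f :: "real \<times> real \<Rightarrow> real" and p :: "real \<times> real"
  assumes "a > 0" and "b > 0"
    and C3: "Ck 3 ({0<..<a} \<times> {0<..<b}) f"
    and interior: "p \<in> {0<..<a} \<times> {0<..<b}"
    and locmax: "\<exists>e>0. \<forall>q\<in>{0..a} \<times> {0..b}. dist q p < e \<longrightarrow> f q \<le> f p"
    and negdef: "negative_definite (hessian f p)"
  shows "\<exists>U. open U \<and> p \<in> U \<and> (\<exists>r::nat. r > 0 \<and> (\<exists>N. \<forall>n\<ge>N. nondegenerate a b f n \<longrightarrow>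
           (\<exists>!ij. fst ij \<le> n \<and> snd ij \<le> n \<and> grid_vertex a b n (fst ij) (snd ij) \<in> U \<and>
                  maximal_in_circle a b f n r (fst ij) (snd ij))))"
proof -
  obtain p1 p2 where p: "p = (p1, p2)" by fastforce
  let ?S = "{0<..<a} \<times> {0<..<b}"
  have C2: "Ck 2 ?S f" using Ck_Suc_imp_Ck[of 2] C3 by (simp add: numeral_3_eq_3 numeral_2_eq_2)
  obtain e where e: "0 < e" "\<And>q. q \<in> {0..a} \<times> {0..b} \<Longrightarrow> dist q p < e \<Longrightarrow> f q \<le> f p"
    using locmax by blast
  have "\<forall>\<^sub>F q in nhds p. q \<in> ?S" using interior by (intro eventually_nhds_in_open open_Times) auto
  moreover have "\<forall>\<^sub>F q in nhds p. dist q p < e" using e(1) eventually_nhds_metric by blast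
  ultimately have "\<forall>\<^sub>F q in nhds p. f q \<le> f p" by eventually_elim (auto intro: e(2))
  then have "pd 0 f p = 0 \<and> pd 1 f p = 0"
    using interior Ck_2_partial_derivatives(1,2)[OF C2, of p1 p2]
    by (intro partial_derivatives_zero_at_local_max) (auto simp: p)
  then obtain \<delta> M lam where "peak a b f (pd 0 f) (pd 1 f) p1 p2 \<delta> M lam"
    using peak_at_nondegenerate_critical_point[OF C2, of p1 p2] interior negdef unfolding p by blast
  then interpret peak a b f "pd 0 f" "pd 1 f" p1 p2 \<delta> M lam .
  show ?thesis
    using unique_circle_max_eventually open_open_square centre_in_open_square pos(1)
    unfolding p by (intro exI[of _ "open_square (\<delta> / 2)"]) auto
qed

end
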